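(* Let $\ell\ge2$ and $n\ge1$ be integers with $\gcd(n,\ell)=1$. Then each switching equivalence class in $\mathrm{Alt}_n(\mathbb{Z}/\ell\mathbb{Z})$ contains exactly one isomorphism class of modular Eulerian matrices; that is, every $M\in\mathrm{Alt}_n(\mathbb{Z}/\ell\mathbb{Z})$ is switching equivalent to some modular Eulerian matrix, and any two modular Eulerian matrices that are switching equivalent are isomorphic.
   Context: $\mathrm{Alt}_n(\mathbb{Z}/\ell\mathbb{Z})$ is the set of $n\times n$ matrices $M=(m_{ij})$ over $\mathbb{Z}/\ell\mathbb{Z}$ with $m_{ii}=0$ and $m_{ij}+m_{ji}=0$. For $v\in[n]$ let $X_v$ be the matrix with $(X_v)_{iv}=1$ and $(X_v)_{vi}=-1$ for all $i\ne v$ and all other entries $0$; the switching at $v$ is $\mu_v(M)=M+X_v$. $M\cong M'$ means there is $\sigma\in\mathfrak{S}_n$ with $m'_{\sigma(i)\sigma(j)}=m_{ij}$ for all $i,j$. $M,M'$ are switching equivalent if there are positive integers $i_1,\dots,i_n$ with $M'\cong\mu_1^{i_1}\cdots\mu_n^{i_n}(M)$. $M\in\mathrm{Alt}_n(\mathbb{Z}/\ell\mathbb{Z})$ is a modular Eulerian matrix if $\sum_{j=1}^n m_{ij}=0$ in $\mathbb{Z}/\ell\mathbb{Z}$ for every $i$. *)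

theory Defs
  imports "HOL-Combinatorics.Permutations"
begin

text \<open>Matrices over Z/lZ of size n x n: functions nat => nat => int, indices 0..n-1
  (standing for [n]), entries the canonical representatives in {0..<l}, and 0 outside
  the index range.\<close>

definition is_mat :: "int \<Rightarrow> nat \<Rightarrow> (nat \<Rightarrow> nat \<Rightarrow> int) \<Rightarrow> bool" where
  "is_mat l n M \<longleftrightarrow> (\<forall>i j. (i < n \<and> j < n \<longrightarrow> 0 \<le> M i j \<and> M i j < l)
                        \<and> (\<not> (i < n \<and> j < n) \<longrightarrow> M i j = 0))"

definition Alt :: "int \<Rightarrow> nat \<Rightarrow> (nat \<Rightarrow> nat \<Rightarrow> int) set" where
  "Alt l n = {M. is_mat l n M \<and> (\<forall>i<n. M i i = 0)
                 \<and> (\<forall>i<n. \<forall>j<n. (M i j + M j i) mod l = 0)}"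

definition Xmat :: "nat \<Rightarrow> nat \<Rightarrow> nat \<Rightarrow> nat \<Rightarrow> int" where
  "Xmat n v i j = (if i < n \<and> j < n \<and> i \<noteq> j then
                     (if j = v then 1 else if i = v then -1 else 0) else 0)"

definition mu :: "int \<Rightarrow> nat \<Rightarrow> nat \<Rightarrow> (nat \<Rightarrow> nat \<Rightarrow> int) \<Rightarrow> (nat \<Rightarrow> nat \<Rightarrow> int)" where
  "mu l n v M = (\<lambda>i j. (M i j + Xmat n v i j) mod l)"

text \<open>mu_1^{e_1} ... mu_n^{e_n} (M), indices shifted to 0..n-1 (innermost is the last one).\<close>
fun mu_seq :: "int \<Rightarrow> nat \<Rightarrow> (nat \<Rightarrow> nat) \<Rightarrow> nat \<Rightarrow> (nat \<Rightarrow> nat \<Rightarrow> int) \<Rightarrow> (nat \<Rightarrow> nat \<Rightarrow> int)" where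
  "mu_seq l n e 0 M = M"
| "mu_seq l n e (Suc k) M = mu_seq l n e k ((mu l n k ^^ e k) M)"

definition iso_mat :: "nat \<Rightarrow> (nat \<Rightarrow> nat \<Rightarrow> int) \<Rightarrow> (nat \<Rightarrow> nat \<Rightarrow> int) \<Rightarrow> bool" where
  "iso_mat n M M' \<longleftrightarrow> (\<exists>\<sigma>. \<sigma> permutes {0..<n} \<and>
                          (\<forall>i<n. \<forall>j<n. M' (\<sigma> i) (\<sigma> j) = M i j))"

definition switching_equiv :: "int \<Rightarrow> nat \<Rightarrow> (nat \<Rightarrow> nat \<Rightarrow> int) \<Rightarrow> (nat \<Rightarrow> nat \<Rightarrow> int) \<Rightarrow> bool" where
  "switching_equiv l n M M' \<longleftrightarrow>
     (\<exists>e. (\<forall>v<n. e v > 0) \<and> iso_mat n (mu_seq l n e n M) M')"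

definition modular_eulerian :: "int \<Rightarrow> nat \<Rightarrow> (nat \<Rightarrow> nat \<Rightarrow> int) \<Rightarrow> bool" where
  "modular_eulerian l n M \<longleftrightarrow> M \<in> Alt l n \<and> (\<forall>i<n. (\<Sum>j<n. M i j) mod l = 0)"

end

theory Submission
  imports Defs "HOL-Number_Theory.Cong"
begin

text \<open>Switchings commute and only shift entries, so \<open>\<mu>\<^sub>1\<^bsup>e\<^sub>1\<^esup> \<cdots> \<mu>\<^sub>n\<^bsup>e\<^sub>n\<^esup>\<close> adds
  \<open>e\<^sub>j - e\<^sub>i\<close> to the entry \<open>(i, j)\<close>. This changes the \<open>i\<close>-th row sum \<open>r\<^sub>i\<close> by
  \<open>\<Sum>\<^sub>j e\<^sub>j - n e\<^sub>i\<close>. Since \<open>n\<close> is invertible modulo \<open>\<ell>\<close> and \<open>\<Sum>\<^sub>i r\<^sub>i \<equiv> 0\<close> for an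
  alternating matrix, \<open>e\<^sub>i \<equiv> n\<^sup>-\<^sup>1 r\<^sub>i\<close> kills every row sum. Conversely, if both \<open>M\<close> and
  its switching are Eulerian, then \<open>n e\<^sub>i \<equiv> \<Sum>\<^sub>j e\<^sub>j\<close> for all \<open>i\<close>, so all \<open>e\<^sub>i\<close> agree
  modulo \<open>\<ell>\<close> and the switching is the identity.\<close>

lemma is_mat_mod_eq: "is_mat l n M \<Longrightarrow> M i j mod l = M i j"
  unfolding is_mat_def by (metis mod_0 mod_pos_pos_trivial)

lemma funpow_mu:
  assumes "\<And>i j. M i j mod l = M i j"
  shows "(mu l n v ^^ k) M = (\<lambda>i j. (M i j + int k * Xmat n v i j) mod l)"
proof (induction k)
  case 0
  then show ?case using assms by simp
next
  case (Suc k)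
  have "(mu l n v ^^ Suc k) M = mu l n v (\<lambda>i j. (M i j + int k * Xmat n v i j) mod l)"
    by (simp only: funpow.simps comp_apply Suc.IH)
  also have "\<dots> = (\<lambda>i j. (M i j + int (Suc k) * Xmat n v i j) mod l)"
    unfolding mu_def by (intro ext) (simp add: mod_add_right_eq distrib_right ac_simps)
  finally show ?case .
qed

lemma mu_seq_eq:
  assumes "\<And>i j. M i j mod l = M i j"
  shows "mu_seq l n e k M = (\<lambda>i j. (M i j + (\<Sum>v<k. int (e v) * Xmat n v i j)) mod l)"
  using assms
proof (induction k arbitrary: M)
  case 0
  then show ?case by simp
next
  case (Suc k)
  let ?M = "\<lambda>i j. (M i j + int (e k) * Xmat n k i j) mod l"
  have "mu_seq l n e (Suc k) M = mu_seq l n e k ?M"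
    using funpow_mu[OF Suc.prems] by simp
  also have "\<dots> = (\<lambda>i j. (?M i j + (\<Sum>v<k. int (e v) * Xmat n v i j)) mod l)"
    by (rule Suc.IH) simp
  also have "\<dots> = (\<lambda>i j. (M i j + (\<Sum>v<Suc k. int (e v) * Xmat n v i j)) mod l)"
    by (intro ext) (simp add: mod_add_right_eq ac_simps)
  finally show ?case .
qed

lemma sum_Xmat:
  fixes c :: "nat \<Rightarrow> int"
  assumes "i < n" "j < n"
  shows "(\<Sum>v<n. c v * Xmat n v i j) = c j - c i"
proof (cases "i = j")
  case True
  then show ?thesis by (simp add: Xmat_def)
next
  case False
  then have "(\<Sum>v<n. c v * Xmat n v i j)
      = (\<Sum>v<n. (if v = j then c v else 0) - (if v = i then c v else 0))"
    using assms by (intro sum.cong) (auto simp: Xmat_def)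
  also have "\<dots> = c j - c i"
    using assms by (simp add: sum_subtractf)
  finally show ?thesis .
qed

lemma sum_Xmat_outside: "\<not> (i < n \<and> j < n) \<Longrightarrow> (\<Sum>v<k. c v * Xmat n v i j) = 0"
  by (auto simp: Xmat_def)

lemma mu_seq_entry:
  assumes "is_mat l n M" "i < n" "j < n"
  shows "mu_seq l n e n M i j = (M i j + int (e j) - int (e i)) mod l"
  using mu_seq_eq[of M l n e n] sum_Xmat[OF assms(2,3), of "\<lambda>v. int (e v)"] is_mat_mod_eq[OF assms(1)]
  by (simp add: add_diff_eq)

lemma mu_seq_outside:
  assumes "is_mat l n M" "\<not> (i < n \<and> j < n)"
  shows "mu_seq l n e n M i j = 0"
  using mu_seq_eq[of M l n e n] sum_Xmat_outside[OF assms(2)] is_mat_mod_eq[OF assms(1)] assms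
  by (simp add: is_mat_def)

lemma mu_seq_in_Alt:
  assumes "l > 0" "M \<in> Alt l n"
  shows "mu_seq l n e n M \<in> Alt l n"
proof -
  let ?N = "mu_seq l n e n M"
  have M: "is_mat l n M" using assms(2) by (simp add: Alt_def)
  have "is_mat l n ?N"
    using mu_seq_entry[OF M] mu_seq_outside[OF M] assms(1) by (simp add: is_mat_def)
  moreover have "\<forall>i<n. ?N i i = 0"
    using mu_seq_entry[OF M] assms(2) by (simp add: Alt_def)
  moreover have "(?N i j + ?N j i) mod l = 0" if "i < n" "j < n" for i j
  proof -
    have "(?N i j + ?N j i) mod l
        = ((M i j + int (e j) - int (e i)) + (M j i + int (e i) - int (e j))) mod l"
      using that by (simp add: mu_seq_entry[OF M] mod_add_eq)
    also have "\<dots> = (M i j + M j i) mod l" by simp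
    finally show ?thesis using assms(2) that by (simp add: Alt_def)
  qed
  ultimately show ?thesis by (simp add: Alt_def)
qed

lemma mu_seq_row_sum_cong:
  assumes "is_mat l n M" "i < n"
  shows "[(\<Sum>j<n. mu_seq l n e n M i j)
          = (\<Sum>j<n. M i j) + (\<Sum>j<n. int (e j)) - int n * int (e i)] (mod l)"
proof -
  have "[(\<Sum>j<n. mu_seq l n e n M i j) = (\<Sum>j<n. M i j + int (e j) - int (e i))] (mod l)"
    using assms by (intro cong_sum) (simp add: mu_seq_entry cong_def)
  also have "(\<Sum>j<n. M i j + int (e j) - int (e i))
      = (\<Sum>j<n. M i j) + (\<Sum>j<n. int (e j)) - int n * int (e i)"
    by (simp add: sum.distrib sum_subtractf)
  finally show ?thesis .
qed

lemma mu_seq_eq_self_if_cong: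
  assumes "is_mat l n M" "\<And>i j. i < n \<Longrightarrow> j < n \<Longrightarrow> [int (e i) = int (e j)] (mod l)"
  shows "mu_seq l n e n M = M"
proof (intro ext)
  fix i j
  show "mu_seq l n e n M i j = M i j"
  proof (cases "i < n \<and> j < n")
    case True
    then have "[M i j + int (e j) - int (e i) = M i j + int (e i) - int (e i)] (mod l)"
      using assms(2) by (intro cong_diff cong_add) (auto simp: cong_sym)
    then show ?thesis
      using True mu_seq_entry[OF assms(1)] is_mat_mod_eq[OF assms(1)] by (simp add: cong_def)
  next
    case False
    then show ?thesis
      using mu_seq_outside[OF assms(1)] assms(1) by (simp add: is_mat_def)
  qed
qed

lemma Alt_sum_cong_0:
  assumes "M \<in> Alt l n" "k \<le> n"
  shows "[(\<Sum>i<k. \<Sum>j<k. M i j) = 0] (mod l)"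
  using assms(2)
proof (induction k)
  case 0
  then show ?case by simp
next
  case (Suc k)
  have "(\<Sum>i<Suc k. \<Sum>j<Suc k. M i j)
      = (\<Sum>i<k. \<Sum>j<k. M i j) + (\<Sum>j<k. M k j + M j k) + M k k"
    by (simp add: sum.distrib algebra_simps)
  moreover have "M k k = 0" using assms(1) Suc.prems by (simp add: Alt_def)
  moreover have "[(\<Sum>j<k. M k j + M j k) = 0] (mod l)"
    using assms(1) Suc.prems by (intro cong_sum[where g = "\<lambda>_. 0", simplified]) (simp add: Alt_def cong_def)
  moreover have "[(\<Sum>i<k. \<Sum>j<k. M i j) = 0] (mod l)"
    using Suc by simp
  ultimately show ?case
    using cong_add by fastforce
qed

lemma iso_mat_refl: "iso_mat n M M"
  unfolding iso_mat_def by (auto intro!: exI[of _ id] permutes_id)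

lemma switching_equiv_mu_seq:
  "(\<And>v. v < n \<Longrightarrow> e v > 0) \<Longrightarrow> switching_equiv l n M (mu_seq l n e n M)"
  unfolding switching_equiv_def using iso_mat_refl by blast

lemma iso_mat_row_sum:
  assumes "iso_mat n M M'" "i < n"
  obtains i' where "i' < n" "(\<Sum>j<n. M i j) = (\<Sum>j<n. M' i' j)"
proof -
  obtain \<sigma> where \<sigma>: "\<sigma> permutes {..<n}" "\<forall>i<n. \<forall>j<n. M' (\<sigma> i) (\<sigma> j) = M i j"
    using assms(1) by (auto simp: iso_mat_def atLeast0LessThan)
  have "(\<Sum>j<n. M i j) = (\<Sum>j<n. M' (\<sigma> i) (\<sigma> j))"
    using \<sigma>(2) assms(2) by simp
  also have "\<dots> = (\<Sum>j<n. M' (\<sigma> i) j)"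
    using sum.reindex_bij_betw[OF permutes_imp_bij[OF \<sigma>(1)]] by simp
  finally show ?thesis
    using that permutes_in_image[OF \<sigma>(1)] assms(2) by blast
qed

lemma exists_eulerian_switching:
  fixes l :: int
  assumes "l > 0" "coprime (int n) l" "M \<in> Alt l n"
  obtains e where "\<And>v. v < n \<Longrightarrow> e v > 0" "modular_eulerian l n (mu_seq l n e n M)"
proof -
  obtain u where u: "[int n * u = 1] (mod l)"
    using assms(2) coprime_iff_invertible_int by blast
  define r where "r i = (\<Sum>j<n. M i j)" for i
  \<comment> \<open>adding \<open>l\<close> makes every exponent positive, as \<open>switching_equiv\<close> demands\<close>
  define e where "e i = nat ((u * r i) mod l + l)" for i
  have e_cong: "[int (e i) = u * r i] (mod l)" for i
    using assms(1) by (simp add: e_def cong_def)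
  have M: "is_mat l n M" using assms(3) by (simp add: Alt_def)
  have "[(\<Sum>j<n. int (e j)) = u * (\<Sum>j<n. r j)] (mod l)"
    unfolding sum_distrib_left by (intro cong_sum e_cong)
  also have "[u * (\<Sum>j<n. r j) = u * 0] (mod l)"
    using Alt_sum_cong_0[OF assms(3) order_refl] by (intro cong_scalar_left) (simp add: r_def)
  finally have sum_e: "[(\<Sum>j<n. int (e j)) = 0] (mod l)" by simp
  have row: "[r i + (\<Sum>j<n. int (e j)) - int n * int (e i) = 0] (mod l)" for i
  proof -
    have "[int n * int (e i) = (int n * u) * r i] (mod l)"
      using cong_scalar_left[OF e_cong] by (simp add: mult.assoc)
    also have "[(int n * u) * r i = 1 * r i] (mod l)"
      using u by (rule cong_scalar_right)
    finally have "[r i + (\<Sum>j<n. int (e j)) - int n * int (e i) = r i + 0 - 1 * r i] (mod l)"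
      using sum_e by (intro cong_diff cong_add) auto
    then show ?thesis by simp
  qed
  have "(\<Sum>j<n. mu_seq l n e n M i j) mod l = 0" if "i < n" for i
    using cong_trans[OF mu_seq_row_sum_cong[OF M that] row[of i, unfolded r_def]] by (simp add: cong_def)
  moreover have "e v > 0" for v
    using assms(1) by (simp add: e_def add_nonneg_pos)
  ultimately show ?thesis
    using that[of e] mu_seq_in_Alt[OF assms(1,3), of e] by (simp add: modular_eulerian_def)
qed

lemma switching_equiv_eulerian_imp_iso:
  fixes l :: int
  assumes "coprime (int n) l"
    and "modular_eulerian l n M" "modular_eulerian l n M'" "switching_equiv l n M M'"
  shows "iso_mat n M M'"
proof -
  obtain e where iso: "iso_mat n (mu_seq l n e n M) M'"
    using assms(4) by (auto simp: switching_equiv_def)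
  have M: "is_mat l n M" using assms(2) by (simp add: modular_eulerian_def Alt_def)
  have rows_M: "[(\<Sum>j<n. M i j) = 0] (mod l)" if "i < n" for i
    using assms(2) that by (simp add: modular_eulerian_def cong_def)
  have n_e: "[int n * int (e i) = (\<Sum>j<n. int (e j))] (mod l)" if i: "i < n" for i
  proof -
    obtain i' where "i' < n" "(\<Sum>j<n. mu_seq l n e n M i j) = (\<Sum>j<n. M' i' j)"
      using iso_mat_row_sum[OF iso i] .
    then have "[(\<Sum>j<n. mu_seq l n e n M i j) = 0] (mod l)"
      using assms(3) by (simp add: modular_eulerian_def cong_def)
    then have "[(\<Sum>j<n. M i j) + (\<Sum>j<n. int (e j)) - int n * int (e i) = 0] (mod l)"
      using cong_trans[OF cong_sym[OF mu_seq_row_sum_cong[OF M i]]] by blast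
    moreover have "[(\<Sum>j<n. M i j) + (\<Sum>j<n. int (e j)) - int n * int (e i)
        = 0 + (\<Sum>j<n. int (e j)) - int n * int (e i)] (mod l)"
      using rows_M[OF i] by (intro cong_diff cong_add) auto
    ultimately have "[0 + (\<Sum>j<n. int (e j)) - int n * int (e i) = 0] (mod l)"
      using cong_sym cong_trans by blast
    then show ?thesis
      by (simp add: cong_diff_iff_cong_0 cong_sym)
  qed
  have "[int (e i) = int (e j)] (mod l)" if "i < n" "j < n" for i j
    using cong_trans[OF n_e[OF that(1)] cong_sym[OF n_e[OF that(2)]]] cong_mult_lcancel[OF assms(1)]
    by blast
  then have "mu_seq l n e n M = M"
    by (rule mu_seq_eq_self_if_cong[OF M])
  then show ?thesis using iso by simp
qed

theorem theorem4p4: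
  fixes l :: int and n :: nat
  assumes "l \<ge> 2" and "n \<ge> 1" and "gcd (int n) l = 1"
  shows "(\<forall>M \<in> Alt l n. \<exists>M'. modular_eulerian l n M' \<and> switching_equiv l n M M')
       \<and> (\<forall>M M'. modular_eulerian l n M \<and> modular_eulerian l n M' \<and> switching_equiv l n M M'
                \<longrightarrow> iso_mat n M M')"
proof -
  have l: "l > 0" and coprime: "coprime (int n) l"
    using assms(1,3) by (auto simp: coprime_iff_gcd_eq_1)
  have "\<exists>M'. modular_eulerian l n M' \<and> switching_equiv l n M M'" if "M \<in> Alt l n" for M
    using exists_eulerian_switching[OF l coprime that] switching_equiv_mu_seq by metis
  then show ?thesis
    using switching_equiv_eulerian_imp_iso[OF coprime] by blast
qed

end
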